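(* Let $m=d_1+\cdots+d_k$ with $d_j\ge1$, $W_1,\ldots,W_k$ 2-dimensional vector spaces, and suppose the 1-dimensional subspaces $$\Gamma_j=\bigotimes_{r\ne j}\bigotimes_{p=1}^{d_r}a_j^{r,p},\qquad a_j^{r,p}\subset W_r^*\ \text{1-dimensional},$$ are such that $\sum_{j=1}^k ins_j(S^{d_j}W_j^*\otimes\Gamma_j)$ has dimension $m+1$. Then $a_j^{r,1}=\cdots=a_j^{r,d_r}=:a_j^r$ for all $j\neq r$, i.e. $\Gamma_j=\bigotimes_{r\ne j}(a_j^r)^{\otimes d_r}$.
   Context: The vector spaces are real or complex. $S^dW^*\subset(W^* )^{\otimes d}$ denotes the symmetric tensors. For each $j$, $ins_j:(W_j^* )^{\otimes d_j}\otimes\bigotimes_{i\ne j}(W_i^* )^{\otimes d_i}\to\bigotimes_{i=1}^k(W_i^* )^{\otimes d_i}$ places the first factor into the $j$-th group of $d_j$ slots; in $\bigotimes_{r\ne j}\bigotimes_{p}a_j^{r,p}$ the factor $a_j^{r,p}$ occupies the $p$-th slot of the $r$-th group. *)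

theory Defs
  imports "HOL-Analysis.Analysis" "HOL-Library.Function_Algebras" "HOL-Combinatorics.Permutations"
begin

text \<open>Coordinates: each dual space W_r^* (dimension 2) is identified with functions
  bool => 'a (two coordinates).  The tensor space of the k groups of d_r slots
  (groups r < k, slots p < d r) is identified with functions from index assignments
  x :: nat => nat => bool (x r p = index in slot p of group r) to scalars, where only
  valid assignments (x r p = False outside the slots) matter; tensors vanish elsewhere.\<close>

definition valid_idx :: "nat \<Rightarrow> (nat \<Rightarrow> nat) \<Rightarrow> (nat \<Rightarrow> nat \<Rightarrow> bool) \<Rightarrow> bool" where
  "valid_idx k d x \<longleftrightarrow> (\<forall>r p. \<not> (r < k \<and> p < d r) \<longrightarrow> x r p = False)"

definition tscale :: "'a::field \<Rightarrow> ('i \<Rightarrow> 'a) \<Rightarrow> ('i \<Rightarrow> 'a)" where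
  "tscale c T = (\<lambda>x. c * T x)"

definition tdim :: "('i \<Rightarrow> 'a::field) set \<Rightarrow> nat" where
  "tdim S = vector_space.dim tscale S"

definition symmetric_tensor :: "nat \<Rightarrow> ((nat \<Rightarrow> bool) \<Rightarrow> 'a) \<Rightarrow> bool" where
  "symmetric_tensor d S \<longleftrightarrow> (\<forall>\<sigma>. \<sigma> permutes {..<d} \<longrightarrow> (\<forall>y. S (y \<circ> \<sigma>) = S y))"

text \<open>ins_j (S^{d_j} W_j^* \<otimes> \<Gamma>_j) where \<Gamma>_j is spanned by
  \<Otimes>_{r \<noteq> j} \<Otimes>_p a j r p.\<close>
definition ins_space ::
  "nat \<Rightarrow> (nat \<Rightarrow> nat) \<Rightarrow> (nat \<Rightarrow> nat \<Rightarrow> nat \<Rightarrow> bool \<Rightarrow> 'a::field) \<Rightarrow> nat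
     \<Rightarrow> ((nat \<Rightarrow> nat \<Rightarrow> bool) \<Rightarrow> 'a) set" where
  "ins_space k d a j = {T. \<exists>S. symmetric_tensor (d j) S \<and>
     T = (\<lambda>x. if valid_idx k d x
              then S (x j) * (\<Prod>r\<in>{..<k} - {j}. \<Prod>p<d r. a j r p (x r p))
              else 0)}"

definition same_line :: "(bool \<Rightarrow> 'a::field) \<Rightarrow> (bool \<Rightarrow> 'a) \<Rightarrow> bool" where
  "same_line u v \<longleftrightarrow> (\<exists>c. c \<noteq> 0 \<and> u = (\<lambda>i. c * v i))"

end

theory Submission
  imports Defs
begin

text \<open>If \<open>a_j0^(r0,p)\<close> and \<open>a_j0^(r0,q)\<close> span different lines, the sum contains \<open>m + 2\<close>
  linearly independent tensors. Pair every slot outside group \<open>L\<close> with a generic vector \<open>(1,t)\<close>: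
  this sends \<open>ins_L(S \<otimes> \<Gamma>_L)\<close> to a nonzero multiple of \<open>S\<close>, and \<open>ins_l(\<beta>^d_l \<otimes> \<Gamma>_l)\<close>
  for \<open>l \<noteq> L\<close> to \<open>\<beta>(1,t)^d_l\<close> times a fixed form on group \<open>L\<close>. The latter vanishes for
  \<open>S_w = (1,w)^d_l - (1+tw)^d_l (1,0)^d_l\<close>, so the \<open>m\<close> tensors \<open>ins_l(S_w \<otimes> \<Gamma>_l)\<close>,
  \<open>1 \<le> w \<le> d_l\<close>, are separated group by group, and within a group by a Vandermonde argument
  on the strings with \<open>n\<close> leading ones. Contracted at \<open>r0\<close>, the two further tensors
  \<open>ins_r0((1,0)^d_r0 \<otimes> \<Gamma>_r0)\<close> and \<open>ins_j0((1,0)^d_j0 \<otimes> \<Gamma>_j0)\<close> give a symmetric form and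
  the product of the \<open>a_j0^(r0,p)\<close>, which is not symmetric.\<close>

lemma (in vector_space) card_le_dim_if_only_trivial_relations:
  assumes fin: "finite I" and sub: "F ` I \<subseteq> span V" and pos: "0 < dim V"
    and triv: "\<And>c. (\<Sum>i\<in>I. scale (c i) (F i)) = 0 \<Longrightarrow> \<forall>i\<in>I. c i = 0"
  shows "card I \<le> dim V"
proof -
  have inj: "inj_on F I"
  proof (rule inj_onI, rule ccontr)
    fix i j assume ij: "i \<in> I" "j \<in> I" "F i = F j" "i \<noteq> j"
    define c where "c l = (if l = i then 1 else if l = j then -1 else (0 :: 'a))" for l
    have "(\<Sum>l\<in>I. scale (c l) (F l)) = (\<Sum>l\<in>{i, j}. scale (c l) (F l))"
      using ij fin by (intro sum.mono_neutral_right) (auto simp: c_def)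
    also have "\<dots> = 0"
      using ij by (simp add: c_def)
    finally show False
      using triv[of c] ij by (auto simp: c_def)
  qed
  have indep: "independent (F ` I)"
  proof (rule independent_if_scalars_zero)
    fix f v assume "(\<Sum>v\<in>F ` I. scale (f v) v) = 0" "v \<in> F ` I"
    then show "f v = 0"
      using triv[of "f \<circ> F"] by (auto simp: sum.reindex[OF inj])
  qed (use fin in simp)
  obtain B where B: "independent B" "V \<subseteq> span B" "card B = dim V"
    using basis_exists by metis
  have "finite B"
    using B(3) pos card.infinite by force
  moreover have "F ` I \<subseteq> span B"
    using sub span_mono[OF B(2)] by (simp add: span_span)
  ultimately have "card (F ` I) \<le> card B"
    using independent_span_bound indep by blast
  then show ?thesis
    using B(3) card_image[OF inj] by simp
qed

lemma vector_space_tscale: "vector_space (tscale :: 'a::field \<Rightarrow> ('i \<Rightarrow> 'a) \<Rightarrow> _)"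
  by unfold_locales (auto simp: tscale_def fun_eq_iff algebra_simps)

lemma coeffs_zero_if_power_sums_zero:
  fixes c :: "nat \<Rightarrow> 'a::field_char_0"
  assumes "\<forall>n\<in>{1..N}. (\<Sum>w\<in>{1..N}. c w * of_nat w ^ n) = 0"
  shows "\<forall>w\<in>{1..N}. c w = 0"
  using assms
proof (induction N arbitrary: c)
  case 0
  then show ?case by simp
next
  case (Suc N)
  text \<open>Replacing \<open>c w\<close> by \<open>c w (w - (N+1))\<close> kills the top coefficient and keeps the first
    \<open>N\<close> power sums zero.\<close>
  define c' where "c' w = c w * (of_nat w - of_nat (Suc N))" for w
  have "(\<Sum>w\<in>{1..N}. c' w * of_nat w ^ n) = 0" if n: "n \<in> {1..N}" for n
  proof -
    have "(\<Sum>w\<in>{1..N}. c' w * of_nat w ^ n) = (\<Sum>w\<in>{1..Suc N}. c' w * of_nat w ^ n)"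
      by (simp add: c'_def)
    also have "\<dots> = (\<Sum>w\<in>{1..Suc N}. c w * of_nat w ^ Suc n)
        - of_nat (Suc N) * (\<Sum>w\<in>{1..Suc N}. c w * of_nat w ^ n)"
      by (simp add: c'_def sum_subtractf sum_distrib_left algebra_simps)
    also have "\<dots> = 0"
      using bspec[OF Suc.prems, of n] bspec[OF Suc.prems, of "Suc n"] n by simp
    finally show ?thesis .
  qed
  then have c'_zero: "\<forall>w\<in>{1..N}. c' w = 0"
    using Suc.IH by blast
  have low: "\<forall>w\<in>{1..N}. c w = 0"
  proof
    fix w assume w: "w \<in> {1..N}"
    then have "(of_nat w :: 'a) \<noteq> of_nat (Suc N)"
      by (simp only: of_nat_eq_iff) auto
    then show "c w = 0"
      using bspec[OF c'_zero w] by (simp add: c'_def)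
  qed
  have "(\<Sum>w\<in>{1..Suc N}. c w * of_nat w ^ 1) = 0"
    using bspec[OF Suc.prems, of 1] by simp
  then have "c (Suc N) = 0"
    using low by (simp del: of_nat_Suc)
  with low show ?case
    by (auto simp: le_Suc_eq)
qed


section \<open>Covectors on a plane\<close>

text \<open>In the coordinates \<open>False, True\<close>, \<open>chart_point u\<close> is \<open>(1, u)\<close> and \<open>pair_chart \<beta> t\<close> is
  the value of the covector \<open>\<beta>\<close> at \<open>(1, t)\<close>.\<close>

definition chart_point :: "'a::field \<Rightarrow> bool \<Rightarrow> 'a" where
  "chart_point u b = (if b then u else 1)"

definition pair_chart :: "(bool \<Rightarrow> 'a::field) \<Rightarrow> 'a \<Rightarrow> 'a" where
  "pair_chart \<beta> t = \<beta> False + t * \<beta> True"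

lemma pair_chart_chart_point [simp]: "pair_chart (chart_point u) t = 1 + t * u"
  by (simp add: pair_chart_def chart_point_def)

lemma bool_fun_eq_0:
  assumes "f False = 0" "f True = 0"
  shows "f = 0"
proof
  fix b
  show "f b = 0 b"
    using assms by (cases b) auto
qed

lemma exists_pair_chart_nonzero:
  fixes A :: "(bool \<Rightarrow> 'a::field_char_0) set"
  assumes "finite A" "0 \<notin> A"
  obtains t where "\<forall>\<beta>\<in>A. pair_chart \<beta> t \<noteq> 0"
proof -
  obtain t where t: "t \<notin> (\<lambda>\<beta>. - \<beta> False / \<beta> True) ` A"
    using ex_new_if_finite[OF infinite_UNIV_char_0] assms(1) by blast
  have "pair_chart \<beta> t \<noteq> 0" if "\<beta> \<in> A" for \<beta>
  proof
    assume zero: "pair_chart \<beta> t = 0"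
    show False
    proof (cases "\<beta> True = 0")
      case True
      then show False
        using zero bool_fun_eq_0[of \<beta>] assms(2) that by (simp add: pair_chart_def)
    next
      case False
      have "t * \<beta> True = - \<beta> False"
        using zero by (simp add: pair_chart_def add_eq_0_iff)
      then have "t = - \<beta> False / \<beta> True"
        using False by (simp add: field_simps)
      then show False
        using t that by blast
    qed
  qed
  then show ?thesis
    using that by blast
qed

lemma det_nonzero_if_not_same_line:
  fixes u v :: "bool \<Rightarrow> 'a::field"
  assumes "u \<noteq> 0" "v \<noteq> 0" "\<not> same_line u v"
  shows "u False * v True - u True * v False \<noteq> 0"
proof
  assume det: "u False * v True - u True * v False = 0"
  have "v False \<noteq> 0 \<or> v True \<noteq> 0"
    using assms(2) bool_fun_eq_0[of v] by blast
  then obtain b where b: "v b \<noteq> 0"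
    by blast
  have cross: "u i * v b = u b * v i" for i
    using det by (cases i; cases b) (simp_all add: algebra_simps)
  define c where "c = u b / v b"
  have "u = (\<lambda>i. c * v i)"
  proof
    fix i
    show "u i = c * v i"
      using cross[of i] b by (simp add: c_def field_simps)
  qed
  moreover have "c \<noteq> 0"
    using assms(1) calculation by auto
  ultimately show False
    using assms(3) by (auto simp: same_line_def)
qed

lemma prod_covectors_not_symmetric:
  fixes A :: "nat \<Rightarrow> bool \<Rightarrow> 'a::field"
  assumes pq: "p < D" "q < D" and nz: "\<forall>s<D. A s \<noteq> 0" and ns: "\<not> same_line (A p) (A q)"
  obtains y where "\<forall>s. y s \<longrightarrow> s < D"
    and "(\<Prod>s<D. A s (y s)) \<noteq> (\<Prod>s<D. A s ((y \<circ> Transposition.transpose p q) s))"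
proof -
  have "same_line (A p) (A p)"
    unfolding same_line_def by (rule exI[of _ 1]) simp
  with ns have "p \<noteq> q"
    by auto
  text \<open>Away from \<open>p, q\<close> the string avoids the zeros of the factors, so the two products
    differ by the determinant of \<open>A p, A q\<close> times a nonzero factor.\<close>
  define y where "y s = (if s = p then False else if s = q then True else s < D \<and> A s False = 0)" for s
  let ?y' = "y \<circ> Transposition.transpose p q"
  define R where "R = (\<Prod>s\<in>{..<D}-{p}-{q}. A s (y s))"
  have "A s (y s) \<noteq> 0" if "s \<in> {..<D}-{p}-{q}" for s
    using nz that bool_fun_eq_0[of "A s"] by (cases "A s False = 0") (auto simp: y_def)
  then have "R \<noteq> 0"
    by (simp add: R_def)
  have R': "(\<Prod>s\<in>{..<D}-{p}-{q}. A s (?y' s)) = R"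
    unfolding R_def by (rule prod.cong) (auto simp: Transposition.transpose_def)
  have y_at: "y p = False" "y q = True" "?y' p = True" "?y' q = False"
    using \<open>p \<noteq> q\<close> by (auto simp: y_def Transposition.transpose_def)
  have split: "(\<Prod>s<D. f s) = f p * f q * (\<Prod>s\<in>{..<D}-{p}-{q}. f s)" for f :: "nat \<Rightarrow> 'a"
    using pq \<open>p \<noteq> q\<close> prod.remove[of "{..<D}" p f] prod.remove[of "{..<D}-{p}" q f]
    by (simp add: mult.assoc)
  have "(\<Prod>s<D. A s (y s)) - (\<Prod>s<D. A s (?y' s))
      = (A p False * A q True - A p True * A q False) * R"
    unfolding split[of "\<lambda>s. A s (y s)"] split[of "\<lambda>s. A s (?y' s)"] R'
    by (simp only: y_at R_def[symmetric]) (simp add: algebra_simps)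
  also have "\<dots> \<noteq> 0"
    using \<open>R \<noteq> 0\<close> det_nonzero_if_not_same_line[OF _ _ ns] nz pq by simp
  finally have "(\<Prod>s<D. A s (y s)) \<noteq> (\<Prod>s<D. A s (?y' s))"
    by simp
  moreover have "\<forall>s. y s \<longrightarrow> s < D"
    using pq by (auto simp: y_def)
  ultimately show ?thesis
    using that by simp
qed


section \<open>Symmetric powers\<close>

definition tensor_power :: "nat \<Rightarrow> (bool \<Rightarrow> 'a::comm_monoid_mult) \<Rightarrow> (nat \<Rightarrow> bool) \<Rightarrow> 'a" where
  "tensor_power D \<beta> y = (\<Prod>p<D. \<beta> (y p))"

lemma tensor_power_permute: "\<sigma> permutes {..<D} \<Longrightarrow> tensor_power D \<beta> (y \<circ> \<sigma>) = tensor_power D \<beta> y"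
  unfolding tensor_power_def using prod.permute[of \<sigma> "{..<D}" "\<lambda>p. \<beta> (y p)"] by (simp add: comp_def)

lemma tensor_power_chart_point: "tensor_power D (chart_point u) y = u ^ card {p. p < D \<and> y p}"
proof -
  have "tensor_power D (chart_point u) y = (\<Prod>p\<in>{..<D} \<inter> {p. y p}. u)"
    by (simp add: tensor_power_def chart_point_def prod.If_cases)
  also have "{..<D} \<inter> {p. y p} = {p. p < D \<and> y p}"
    by auto
  finally show ?thesis
    by simp
qed

lemma tensor_power_chart_point_prefix:
  assumes "n \<le> D"
  shows "tensor_power D (chart_point u) (\<lambda>p. p < n) = u ^ n"
proof -
  have "{p. p < D \<and> p < n} = {..<n}"
    using assms by auto
  then show ?thesis
    by (simp add: tensor_power_chart_point)
qed

text \<open>For \<open>w \<ge> 1\<close> the correction term makes \<open>witness_form D t w\<close> vanish at \<open>(1,t)^D\<close>.\<close>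

definition witness_form :: "nat \<Rightarrow> 'a::field \<Rightarrow> nat \<Rightarrow> (nat \<Rightarrow> bool) \<Rightarrow> 'a" where
  "witness_form D t w =
     (if w = 0 then tensor_power D (chart_point 0)
      else (\<lambda>z. tensor_power D (chart_point (of_nat w)) z
                - pair_chart (chart_point (of_nat w)) t ^ D * tensor_power D (chart_point 0) z))"

lemma witness_form_permute:
  "\<sigma> permutes {..<D} \<Longrightarrow> witness_form D t w (y \<circ> \<sigma>) = witness_form D t w y"
  by (simp add: witness_form_def tensor_power_permute)

lemma symmetric_witness_form: "symmetric_tensor D (witness_form D t w)"
  by (simp add: symmetric_tensor_def witness_form_permute)

lemma witness_form_prefix:
  "1 \<le> n \<Longrightarrow> n \<le> D \<Longrightarrow> witness_form D t w (\<lambda>p. p < n) = of_nat w ^ n"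
  by (simp add: witness_form_def tensor_power_chart_point_prefix power_0_left)

lemma witness_form_zero_empty: "witness_form D t 0 (\<lambda>p. False) = 1"
  by (simp add: witness_form_def tensor_power_def chart_point_def)


section \<open>Contraction with a generic vector\<close>

definition ins_tensor ::
  "nat \<Rightarrow> (nat \<Rightarrow> nat) \<Rightarrow> (nat \<Rightarrow> nat \<Rightarrow> nat \<Rightarrow> bool \<Rightarrow> 'a::field) \<Rightarrow> nat
     \<Rightarrow> ((nat \<Rightarrow> bool) \<Rightarrow> 'a) \<Rightarrow> (nat \<Rightarrow> nat \<Rightarrow> bool) \<Rightarrow> 'a" where
  "ins_tensor k d a j S = (\<lambda>x. if valid_idx k d x
     then S (x j) * (\<Prod>r\<in>{..<k} - {j}. \<Prod>p<d r. a j r p (x r p)) else 0)"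

lemma ins_tensor_in_ins_space: "symmetric_tensor (d j) S \<Longrightarrow> ins_tensor k d a j S \<in> ins_space k d a j"
  unfolding ins_space_def ins_tensor_def by blast

lemma ins_tensor_diff:
  "ins_tensor k d a j (\<lambda>z. S z - c * S' z) = (\<lambda>x. ins_tensor k d a j S x - c * ins_tensor k d a j S' x)"
  by (simp add: ins_tensor_def fun_eq_iff algebra_simps)

definition outer_slots :: "nat \<Rightarrow> (nat \<Rightarrow> nat) \<Rightarrow> nat \<Rightarrow> (nat \<times> nat) set" where
  "outer_slots k d L = (SIGMA r:{..<k} - {L}. {..<d r})"

definition merge_idx ::
  "nat \<Rightarrow> (nat \<Rightarrow> nat) \<Rightarrow> nat \<Rightarrow> (nat \<Rightarrow> bool) \<Rightarrow> (nat \<times> nat \<Rightarrow> bool) \<Rightarrow> nat \<Rightarrow> nat \<Rightarrow> bool" where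
  "merge_idx k d L y g = (\<lambda>r p. if r = L \<and> p < d L then y p
     else if (r, p) \<in> outer_slots k d L then g (r, p) else False)"

text \<open>Pairs every slot outside group \<open>L\<close> with \<open>(1, t)\<close> and evaluates group \<open>L\<close> at \<open>y\<close>.\<close>

definition contract ::
  "nat \<Rightarrow> (nat \<Rightarrow> nat) \<Rightarrow> 'a::field \<Rightarrow> nat \<Rightarrow> (nat \<Rightarrow> bool) \<Rightarrow> ((nat \<Rightarrow> nat \<Rightarrow> bool) \<Rightarrow> 'a) \<Rightarrow> 'a" where
  "contract k d t L y T = (\<Sum>g\<in>outer_slots k d L \<rightarrow>\<^sub>E UNIV.
     T (merge_idx k d L y g) * (\<Prod>s\<in>outer_slots k d L. chart_point t (g s)))"

lemma sum_fun_apply: "(sum f I) x = (\<Sum>i\<in>I. f i x)"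
  by (induction I rule: infinite_finite_induct) auto

lemma contract_lincomb:
  "contract k d t L y (\<Sum>i\<in>I. tscale (c i) (F i)) = (\<Sum>i\<in>I. c i * contract k d t L y (F i))"
  unfolding contract_def sum_fun_apply tscale_def
  by (simp add: sum_distrib_left sum_distrib_right mult.assoc sum.swap[of _ I])

lemma contract_zero [simp]: "contract k d t L y 0 = 0"
  by (simp add: contract_def)

lemma contract_diff:
  "contract k d t L y (\<lambda>x. A x - c * B x) = contract k d t L y A - c * contract k d t L y B"
  by (simp add: contract_def sum_subtractf sum_distrib_left algebra_simps)

lemma contract_product:
  fixes f :: "nat \<Rightarrow> nat \<Rightarrow> bool \<Rightarrow> 'a::field"
  assumes "\<And>g. T (merge_idx k d L y g) = X * (\<Prod>r\<in>{..<k}-{L}. \<Prod>p<d r. f r p (g (r, p)))"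
  shows "contract k d t L y T = X * (\<Prod>r\<in>{..<k}-{L}. \<Prod>p<d r. pair_chart (f r p) t)"
proof -
  have nest: "(\<Prod>r\<in>{..<k}-{L}. \<Prod>p<d r. h (r, p)) = (\<Prod>s\<in>outer_slots k d L. h s)"
    for h :: "nat \<times> nat \<Rightarrow> 'a"
    unfolding outer_slots_def by (subst prod.Sigma) (auto simp: case_prod_beta')
  let ?h = "\<lambda>s b. f (fst s) (snd s) b * chart_point t b"
  have "contract k d t L y T = (\<Sum>g\<in>outer_slots k d L \<rightarrow>\<^sub>E UNIV. X * (\<Prod>s\<in>outer_slots k d L. ?h s (g s)))"
    unfolding contract_def assms
    by (intro sum.cong refl)
      (simp add: nest[of "\<lambda>s. f (fst s) (snd s) (g s)" for g, simplified] prod.distrib mult.assoc)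
  also have "\<dots> = X * (\<Sum>g\<in>outer_slots k d L \<rightarrow>\<^sub>E UNIV. \<Prod>s\<in>outer_slots k d L. ?h s (g s))"
    by (simp add: sum_distrib_left)
  also have "(\<Sum>g\<in>outer_slots k d L \<rightarrow>\<^sub>E UNIV. \<Prod>s\<in>outer_slots k d L. ?h s (g s))
      = (\<Prod>s\<in>outer_slots k d L. \<Sum>b\<in>UNIV. ?h s b)"
    by (rule prod_sum_PiE[symmetric]) (auto simp: outer_slots_def)
  also have "\<dots> = (\<Prod>r\<in>{..<k}-{L}. \<Prod>p<d r. pair_chart (f r p) t)"
    by (simp add: nest[symmetric] UNIV_bool pair_chart_def chart_point_def mult.commute)
  finally show ?thesis .
qed

lemma valid_merge_idx: "L < k \<Longrightarrow> valid_idx k d (merge_idx k d L y g)"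
  by (auto simp: valid_idx_def merge_idx_def outer_slots_def)

lemma contract_ins_tensor_same:
  assumes "L < k" and y: "\<forall>p. y p \<longrightarrow> p < d L"
  shows "contract k d t L y (ins_tensor k d a L S)
    = S y * (\<Prod>r\<in>{..<k}-{L}. \<Prod>p<d r. pair_chart (a L r p) t)"
proof (rule contract_product)
  fix g
  have "merge_idx k d L y g L = y"
    using y by (auto simp: merge_idx_def outer_slots_def fun_eq_iff)
  moreover have "(\<Prod>r\<in>{..<k}-{L}. \<Prod>p<d r. a L r p (merge_idx k d L y g r p))
      = (\<Prod>r\<in>{..<k}-{L}. \<Prod>p<d r. a L r p (g (r, p)))"
    by (intro prod.cong refl) (auto simp: merge_idx_def outer_slots_def)
  ultimately show "ins_tensor k d a L S (merge_idx k d L y g)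
      = S y * (\<Prod>r\<in>{..<k}-{L}. \<Prod>p<d r. a L r p (g (r, p)))"
    using assms by (simp add: ins_tensor_def valid_merge_idx)
qed

lemma contract_ins_tensor_power_other:
  assumes "L < k" "l < k" "l \<noteq> L"
  shows "contract k d t L y (ins_tensor k d a l (tensor_power (d l) \<beta>))
    = (\<Prod>p<d L. a l L p (y p)) * pair_chart \<beta> t ^ d l
      * (\<Prod>r\<in>{..<k}-{L}-{l}. \<Prod>p<d r. pair_chart (a l r p) t)"
proof -
  let ?f = "\<lambda>r p. if r = l then \<beta> else a l r p"
  have "contract k d t L y (ins_tensor k d a l (tensor_power (d l) \<beta>))
      = (\<Prod>p<d L. a l L p (y p)) * (\<Prod>r\<in>{..<k}-{L}. \<Prod>p<d r. pair_chart (?f r p) t)"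
  proof (rule contract_product)
    fix g
    have "(\<Prod>r\<in>{..<k}-{l}. \<Prod>p<d r. a l r p (merge_idx k d L y g r p))
        = (\<Prod>p<d L. a l L p (y p)) * (\<Prod>r\<in>{..<k}-{l}-{L}. \<Prod>p<d r. a l r p (g (r, p)))"
      using assms by (subst prod.remove[of _ L]) (auto simp: merge_idx_def outer_slots_def
          intro!: arg_cong2[where f = "(*)"] prod.cong)
    moreover have "tensor_power (d l) \<beta> (merge_idx k d L y g l) = (\<Prod>p<d l. \<beta> (g (l, p)))"
      using assms by (auto simp: tensor_power_def merge_idx_def outer_slots_def intro!: prod.cong)
    moreover have "(\<Prod>r\<in>{..<k}-{L}. \<Prod>p<d r. ?f r p (g (r, p)))
        = (\<Prod>p<d l. \<beta> (g (l, p))) * (\<Prod>r\<in>{..<k}-{L}-{l}. \<Prod>p<d r. a l r p (g (r, p)))"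
      using assms by (subst prod.remove[of _ l]) auto
    ultimately show "ins_tensor k d a l (tensor_power (d l) \<beta>) (merge_idx k d L y g)
        = (\<Prod>p<d L. a l L p (y p)) * (\<Prod>r\<in>{..<k}-{L}. \<Prod>p<d r. ?f r p (g (r, p)))"
      using assms by (simp add: ins_tensor_def valid_merge_idx Diff_insert2[symmetric]
          insert_commute algebra_simps)
  qed
  also have "(\<Prod>r\<in>{..<k}-{L}. \<Prod>p<d r. pair_chart (?f r p) t)
      = pair_chart \<beta> t ^ d l * (\<Prod>r\<in>{..<k}-{L}-{l}. \<Prod>p<d r. pair_chart (a l r p) t)"
    using assms by (subst prod.remove[of _ l]) auto
  finally show ?thesis
    by (simp add: mult.assoc)
qed


section \<open>Independent witnesses\<close>

definition witness ::
  "nat \<Rightarrow> (nat \<Rightarrow> nat) \<Rightarrow> (nat \<Rightarrow> nat \<Rightarrow> nat \<Rightarrow> bool \<Rightarrow> 'a::field) \<Rightarrow> 'a \<Rightarrow> nat \<Rightarrow> nat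
     \<Rightarrow> (nat \<Rightarrow> nat \<Rightarrow> bool) \<Rightarrow> 'a" where
  "witness k d a t l w = ins_tensor k d a l (witness_form (d l) t w)"

lemma witness_in_ins_space: "witness k d a t l w \<in> ins_space k d a l"
  by (simp add: witness_def ins_tensor_in_ins_space symmetric_witness_form)

lemma contract_witness_same:
  "L < k \<Longrightarrow> \<forall>p. y p \<longrightarrow> p < d L \<Longrightarrow> contract k d t L y (witness k d a t L w)
    = witness_form (d L) t w y * (\<Prod>r\<in>{..<k}-{L}. \<Prod>p<d r. pair_chart (a L r p) t)"
  by (simp add: witness_def contract_ins_tensor_same)

lemma contract_witness_other:
  assumes "L < k" "l < k" "l \<noteq> L"
  shows "contract k d t L y (witness k d a t l w) = (if w = 0
    then (\<Prod>p<d L. a l L p (y p)) * (\<Prod>r\<in>{..<k}-{L}-{l}. \<Prod>p<d r. pair_chart (a l r p) t)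
    else 0)"
  using assms
  by (simp add: witness_def witness_form_def ins_tensor_diff contract_diff
      contract_ins_tensor_power_other)

definition witness_index :: "nat \<Rightarrow> (nat \<Rightarrow> nat) \<Rightarrow> nat \<Rightarrow> nat \<Rightarrow> (nat \<times> nat) set" where
  "witness_index k d r0 j0 = (SIGMA l:{..<k}. {1..d l}) \<union> {(r0, 0), (j0, 0)}"

lemma finite_witness_index: "finite (witness_index k d r0 j0)"
  by (simp add: witness_index_def)

lemma card_witness_index:
  assumes "r0 \<noteq> j0"
  shows "card (witness_index k d r0 j0) = (\<Sum>l<k. d l) + 2"
proof -
  have "card (SIGMA l:{..<k}. {1..d l}) = (\<Sum>l<k. d l)"
    by (simp add: card_SigmaI)
  moreover have "(SIGMA l:{..<k}. {1..d l}) \<inter> {(r0, 0), (j0, 0)} = {}"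
    by auto
  ultimately show ?thesis
    using assms by (simp add: witness_index_def card_Un_disjoint)
qed

lemma contract_witness_combination:
  assumes "L < k" "r0 \<noteq> j0"
  shows "contract k d t L y (\<Sum>i\<in>witness_index k d r0 j0. tscale (c i) (case_prod (witness k d a t) i))
    = (\<Sum>w\<in>{1..d L}. c (L, w) * contract k d t L y (witness k d a t L w))
      + c (r0, 0) * contract k d t L y (witness k d a t r0 0)
      + c (j0, 0) * contract k d t L y (witness k d a t j0 0)"
proof -
  let ?C = "\<lambda>i. c i * contract k d t L y (case_prod (witness k d a t) i)"
  have "(\<Sum>i\<in>witness_index k d r0 j0. ?C i) = (\<Sum>i\<in>(SIGMA l:{..<k}. {1..d l}). ?C i) + ?C (r0, 0) + ?C (j0, 0)"
    unfolding witness_index_def using assms by (subst sum.union_disjoint) auto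
  also have "(\<Sum>i\<in>(SIGMA l:{..<k}. {1..d l}). ?C i) = (\<Sum>l<k. \<Sum>w\<in>{1..d l}. ?C (l, w))"
    by (simp add: sum.Sigma split_def)
  also have "\<dots> = (\<Sum>w\<in>{1..d L}. ?C (L, w)) + (\<Sum>l\<in>{..<k}-{L}. \<Sum>w\<in>{1..d l}. ?C (l, w))"
    using assms by (subst sum.remove[of _ L]) auto
  also have "(\<Sum>l\<in>{..<k}-{L}. \<Sum>w\<in>{1..d l}. ?C (l, w)) = 0"
    using assms by (intro sum.neutral ballI) (auto simp: contract_witness_other)
  finally show ?thesis
    by (simp add: contract_lincomb)
qed

lemma witness_relations_trivial:
  fixes a :: "nat \<Rightarrow> nat \<Rightarrow> nat \<Rightarrow> bool \<Rightarrow> 'a::field_char_0"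
  assumes a_nz: "\<forall>j<k. \<forall>r<k. r \<noteq> j \<longrightarrow> (\<forall>p<d r. a j r p \<noteq> 0)"
    and t: "\<forall>j<k. \<forall>r<k. r \<noteq> j \<longrightarrow> (\<forall>p<d r. pair_chart (a j r p) t \<noteq> 0)"
    and ij: "j0 < k" "r0 < k" "r0 \<noteq> j0"
    and pq: "p < d r0" "q < d r0" and ns: "\<not> same_line (a j0 r0 p) (a j0 r0 q)"
    and rel: "(\<Sum>i\<in>witness_index k d r0 j0. tscale (c i) (case_prod (witness k d a t) i)) = 0"
  shows "\<forall>i\<in>witness_index k d r0 j0. c i = 0"
proof -
  define G where "G L = (\<Prod>r\<in>{..<k}-{L}. \<Prod>p<d r. pair_chart (a L r p) t)" for L
  have G_nz: "G L \<noteq> 0" if "L < k" for L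
    using t that by (auto simp: G_def)
  let ?C = "\<lambda>L y l. contract k d t L y (witness k d a t l 0)"
  have eq: "(\<Sum>w\<in>{1..d L}. c (L, w) * (witness_form (d L) t w y * G L))
      + c (r0, 0) * ?C L y r0 + c (j0, 0) * ?C L y j0 = 0"
    if "L < k" "\<forall>p. y p \<longrightarrow> p < d L" for L y
    using contract_witness_combination[OF that(1) ij(3), where d = d and t = t and y = y and c = c and a = a] rel that
    by (simp add: contract_witness_same G_def)
  have j0_zero: "c (j0, 0) = 0"
  proof -
    let ?\<tau> = "Transposition.transpose p q"
    let ?\<alpha> = "\<lambda>y. \<Prod>s<d r0. a j0 r0 s (y s)"
    obtain y where y: "\<forall>s. y s \<longrightarrow> s < d r0" and y_asym: "?\<alpha> y \<noteq> ?\<alpha> (y \<circ> ?\<tau>)"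
      using prod_covectors_not_symmetric[OF pq _ ns] a_nz ij by blast
    have \<tau>: "?\<tau> permutes {..<d r0}"
      using pq by (intro permutes_swap_id) auto
    have y\<tau>: "\<forall>s. (y \<circ> ?\<tau>) s \<longrightarrow> s < d r0"
      using y pq by (auto simp: Transposition.transpose_def split: if_splits)
    define R where "R = (\<Prod>r\<in>{..<k}-{r0}-{j0}. \<Prod>p<d r. pair_chart (a j0 r p) t)"
    have "R \<noteq> 0"
      using t ij by (auto simp: R_def)
    text \<open>Only the \<open>(j0, 0)\<close> term of the relation contracted at \<open>r0\<close> fails to be symmetric.\<close>
    have "c (j0, 0) * (?\<alpha> y * R) = c (j0, 0) * (?\<alpha> (y \<circ> ?\<tau>) * R)"
      using arg_cong2[where f = "(-)", OF eq[OF ij(2) y] eq[OF ij(2) y\<tau>]] ij y y\<tau>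
      by (simp add: contract_witness_same contract_witness_other witness_form_permute[OF \<tau>, unfolded comp_def] R_def)
    then show ?thesis
      using y_asym \<open>R \<noteq> 0\<close> by simp
  qed
  have group_zero: "\<forall>w\<in>{1..d L}. c (L, w) = 0"
    if L: "L < k" and r0_term: "\<forall>n\<in>{1..d L}. c (r0, 0) * ?C L (\<lambda>p. p < n) r0 = 0" for L
  proof (rule coeffs_zero_if_power_sums_zero[of "d L" "\<lambda>w. c (L, w)"], rule ballI)
    fix n assume n: "n \<in> {1..d L}"
    have "(\<Sum>w\<in>{1..d L}. c (L, w) * of_nat w ^ n) * G L = 0"
      using eq[OF L, of "\<lambda>p. p < n"] bspec[OF r0_term n] j0_zero n
      by (simp add: witness_form_prefix sum_distrib_right mult.assoc)
    then show "(\<Sum>w\<in>{1..d L}. c (L, w) * of_nat w ^ n) = 0"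
      using G_nz[OF L] by simp
  qed
  have r0_group_zero: "\<forall>w\<in>{1..d r0}. c (r0, w) = 0"
    using ij by (intro group_zero) (auto simp: contract_witness_same witness_form_prefix)
  have r0_zero: "c (r0, 0) = 0"
    using eq[OF ij(2), of "\<lambda>_. False"] r0_group_zero j0_zero G_nz[OF ij(2)] ij(2)
    by (simp add: contract_witness_same witness_form_zero_empty G_def)
  have "\<forall>w\<in>{1..d L}. c (L, w) = 0" if "L < k" for L
    using that r0_zero by (intro group_zero) auto
  then show ?thesis
    using j0_zero r0_zero by (auto simp: witness_index_def)
qed

theorem corollary2p33:
  fixes k :: nat and d :: "nat \<Rightarrow> nat"
    and a :: "nat \<Rightarrow> nat \<Rightarrow> nat \<Rightarrow> bool \<Rightarrow> 'a::real_normed_field"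
  assumes d_pos: "\<forall>j<k. d j \<ge> 1"
    and a_nz: "\<forall>j<k. \<forall>r<k. r \<noteq> j \<longrightarrow> (\<forall>p<d r. a j r p \<noteq> 0)"
    and dim: "tdim (\<Union>j<k. ins_space k d a j) = (\<Sum>j<k. d j) + 1"
  shows "\<forall>j<k. \<forall>r<k. r \<noteq> j \<longrightarrow> (\<forall>p<d r. \<forall>q<d r. same_line (a j r p) (a j r q))"
proof (rule ccontr)
  assume "\<not> ?thesis"
  then obtain j0 r0 p q where ij: "j0 < k" "r0 < k" "r0 \<noteq> j0" and pq: "p < d r0" "q < d r0"
    and ns: "\<not> same_line (a j0 r0 p) (a j0 r0 q)"
    by blast
  let ?A = "(\<lambda>(j, r, p). a j r p) ` (SIGMA j:{..<k}. SIGMA r:{..<k}-{j}. {..<d r})"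
  have "0 \<notin> ?A"
    using a_nz by force
  then obtain t where "\<forall>\<beta>\<in>?A. pair_chart \<beta> t \<noteq> 0"
    using exists_pair_chart_nonzero[of ?A] by blast
  then have t: "\<forall>j<k. \<forall>r<k. r \<noteq> j \<longrightarrow> (\<forall>p<d r. pair_chart (a j r p) t \<noteq> 0)"
    by force
  interpret tensors: vector_space "tscale :: 'a \<Rightarrow> ((nat \<Rightarrow> nat \<Rightarrow> bool) \<Rightarrow> 'a) \<Rightarrow> _"
    by (rule vector_space_tscale)
  have "card (witness_index k d r0 j0) \<le> tdim (\<Union>j<k. ins_space k d a j)"
    unfolding tdim_def
  proof (rule tensors.card_le_dim_if_only_trivial_relations[OF finite_witness_index])
    show "case_prod (witness k d a t) ` witness_index k d r0 j0 \<subseteq> tensors.span (\<Union>j<k. ins_space k d a j)"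
      using ij witness_in_ins_space by (fastforce simp: witness_index_def intro: tensors.span_base)
    show "0 < tensors.dim (\<Union>j<k. ins_space k d a j)"
      using dim by (simp add: tdim_def)
  qed (rule witness_relations_trivial[OF a_nz t ij pq ns])
  then show False
    using dim card_witness_index[OF ij(3)] by simp
qed

end
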